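(* Call a matrix in $GL_n(\mathbb{F}[t])$ an elementary unit of $\mathcal{M}$ if it is of one of the following types: (i) $\sum_{i\ne a}E_{ii}+\alpha E_{aa}$ for some $\alpha\in\mathbb{F}\setminus\{0\}$ and $a\in\{1,\dots,n\}$; (ii) $I_n+t^N\alpha E_{ab}$ for some $N\ge 0$, $\alpha\in\mathbb{F}$ and $1\le a<b\le n$; (iii) $I_n+t^N\alpha E_{ab}$ for some $N>0$, $\alpha\in\mathbb{F}$ and $1\le b<a\le n$. Then every matrix in $\mathcal{M}$ can be brought into semi-reduced form by left multiplication with finitely many elementary units of $\mathcal{M}$. Consequently, every unit $M\in\mathcal{M}^\times$ of the ring $\mathcal{M}$ is a product of elementary units of $\mathcal{M}$.
   Context: Let $\mathbb{F}$ be a finite field with $q$ elements and $n\geq 2$ a divisor of $q-1$. $\mathcal{M}=\{(m_{ab})\in\mathbb{F}[t]^{n\times n}\mid m_{ab}(0)=0\text{ for }1\le b<a\le n\}$, a subring of $\mathbb{F}[t]^{n\times n}$. $E_{ab}\in\mathbb{F}^{n\times n}$ is the matrix with $1$ at position $(a,b)$ and $0$ elsewhere; $GL_n(\mathbb{F}[t])$ is the set of $n\times n$ polynomial matrices with determinant in $\mathbb{F}\setminus\{0\}$. For $M=(m_{ab})\in\mathcal{M}$ with $d_{ab}=\deg m_{ab}$ ($\deg 0=-\infty$), the degree matrix $\mathcal{D}(M)$ has entries $\mathcal{D}(M)_{ab}=nd_{ab}-a+b\in\mathbb{N}_0\cup\{-\infty\}$; a row of $\mathcal{D}(M)$ is trivial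 if all its entries are $-\infty$; $M$ is semi-reduced if the maxima of the non-trivial rows of $\mathcal{D}(M)$ lie in pairwise different columns. *)

theory Defs
  imports "Jordan_Normal_Form.Matrix" "HOL-Computational_Algebra.Polynomial"
begin

(* Indices are 0-based: row/column a in {0..<n} corresponds to a+1 in the paper.
   The degree-matrix entry n*d_ab - a + b is invariant under this shift. *)

definition in_M :: "nat \<Rightarrow> 'a::field poly mat \<Rightarrow> bool" where
  "in_M n M \<longleftrightarrow> M \<in> carrier_mat n n \<and>
     (\<forall>a<n. \<forall>b<n. b < a \<longrightarrow> poly (M $$ (a,b)) 0 = 0)"

(* entry of the degree matrix; None encodes -infinity (zero polynomial) *)
definition deg_mat :: "nat \<Rightarrow> 'a::field poly mat \<Rightarrow> nat \<Rightarrow> nat \<Rightarrow> int option" where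
  "deg_mat n M a b = (if M $$ (a,b) = 0 then None
      else Some (int n * int (degree (M $$ (a,b))) - int a + int b))"

definition nontrivial_row :: "nat \<Rightarrow> 'a::field poly mat \<Rightarrow> nat \<Rightarrow> bool" where
  "nontrivial_row n M a \<longleftrightarrow> (\<exists>b<n. deg_mat n M a b \<noteq> None)"

definition row_max_cols :: "nat \<Rightarrow> 'a::field poly mat \<Rightarrow> nat \<Rightarrow> nat set" where
  "row_max_cols n M a = {b. b < n \<and> (\<exists>v. deg_mat n M a b = Some v \<and>
      (\<forall>b'<n. \<forall>v'. deg_mat n M a b' = Some v' \<longrightarrow> v' \<le> v))}"

definition semi_reduced :: "nat \<Rightarrow> 'a::field poly mat \<Rightarrow> bool" where
  "semi_reduced n M \<longleftrightarrow> (\<forall>a<n. \<forall>a'<n. a \<noteq> a' \<longrightarrow> nontrivial_row n M a \<longrightarrow>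
      nontrivial_row n M a' \<longrightarrow> row_max_cols n M a \<inter> row_max_cols n M a' = {})"

definition E_mat :: "nat \<Rightarrow> nat \<Rightarrow> nat \<Rightarrow> 'a::field poly \<Rightarrow> 'a poly mat" where
  "E_mat n a b c = mat n n (\<lambda>(i,j). if i = a \<and> j = b then c else 0)"

definition elementary_unit :: "nat \<Rightarrow> 'a::field poly mat \<Rightarrow> bool" where
  "elementary_unit n U \<longleftrightarrow>
     (\<exists>\<alpha> a. \<alpha> \<noteq> 0 \<and> a < n \<and>
        U = mat n n (\<lambda>(i,j). if i = j then (if i = a then [:\<alpha>:] else 1) else 0))
   \<or> (\<exists>N \<alpha> a b. a < b \<and> b < n \<and> U = 1\<^sub>m n + E_mat n a b (monom \<alpha> N))
   \<or> (\<exists>N \<alpha> a b. N > 0 \<and> b < a \<and> a < n \<and> U = 1\<^sub>m n + E_mat n a b (monom \<alpha> N))"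

definition mat_prod_list :: "nat \<Rightarrow> 'a::field poly mat list \<Rightarrow> 'a poly mat" where
  "mat_prod_list n Us = foldr (\<lambda>U P. U * P) Us (1\<^sub>m n)"

end

theory Submission
  imports Defs
begin

text \<open>
Left multiplication by elementary units of \<open>\<M>\<close> performs the row operations of
Popov-style reduction: if two non-trivial rows \<open>a\<close>, \<open>a'\<close> of the degree matrix attain their
maxima in the same column, adding a monomial multiple \<open>\<alpha> t\<^sup>N\<close> of the row with the smaller
maximum to the other cancels the leading term. The normalisation \<open>n d - a + b\<close> of the degree
matrix makes this multiplier an elementary unit of \<open>\<M>\<close>: a smaller maximum in a row \<open>a' < a\<close>
forces a strictly smaller degree, so \<open>N > 0\<close>. The entries of one row of the degree matrix lie
in pairwise different residue classes mod \<open>n\<close>, so the maximum of the treated row strictly drops,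
and the sum of the row maxima is a terminating potential.

A semi-reduced matrix \<open>P\<close> has the predictable degree property: in a product \<open>Q P\<close> the
leading terms cannot cancel. If \<open>P\<close> is a unit of \<open>\<M>\<close>, comparing \<open>Q P = 1\<close> with this
property forces all row maxima of \<open>P\<close> to vanish, i.e. \<open>P\<close> is a constant diagonal matrix, a
product of elementary units of the first type. Since every elementary unit has an elementary
inverse, a unit \<open>M\<close> is the product of the inverses of the reducing units and of \<open>P\<close>.
\<close>

definition add_row_mat :: "nat \<Rightarrow> nat \<Rightarrow> nat \<Rightarrow> 'a::field poly \<Rightarrow> 'a poly mat" where
  "add_row_mat n a a' c = 1\<^sub>m n + E_mat n a a' c"

definition scale_row_mat :: "nat \<Rightarrow> nat \<Rightarrow> 'a::field \<Rightarrow> 'a poly mat" where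
  "scale_row_mat n a \<alpha> = mat n n (\<lambda>(i,j). if i = j then (if i = a then [:\<alpha>:] else 1) else 0)"

lemma carrier_add_row_mat [simp]: "add_row_mat n a a' c \<in> carrier_mat n n"
  by (simp add: add_row_mat_def E_mat_def)

lemma carrier_scale_row_mat [simp]: "scale_row_mat n a \<alpha> \<in> carrier_mat n n"
  by (simp add: scale_row_mat_def)

lemma dim_scale_row_mat [simp]:
  "dim_row (scale_row_mat n a \<alpha>) = n" "dim_col (scale_row_mat n a \<alpha>) = n"
  by (simp_all add: scale_row_mat_def)

lemma index_mult_mat_sum:
  assumes "A \<in> carrier_mat n n" "B \<in> carrier_mat n n" "i < n" "j < n"
  shows "(A * B) $$ (i,j) = (\<Sum>k<n. A $$ (i,k) * B $$ (k,j))"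
  using assms by (simp add: scalar_prod_def lessThan_atLeast0)

lemma index_add_row_mat_mult:
  fixes M :: "'a::field poly mat"
  assumes M: "M \<in> carrier_mat n n" and "a' < n" "i < n" "j < n"
  shows "(add_row_mat n a a' c * M) $$ (i,j) = M $$ (i,j) + (if i = a then c * M $$ (a',j) else 0)"
proof -
  have "(add_row_mat n a a' c * M) $$ (i,j) =
     (\<Sum>k<n. (if k = i then M $$ (k,j) else 0) + (if i = a \<and> k = a' then c * M $$ (k,j) else 0))"
    unfolding index_mult_mat_sum[OF carrier_add_row_mat M assms(3,4)]
    by (rule sum.cong[OF refl]) (use assms in \<open>auto simp: add_row_mat_def E_mat_def distrib_right\<close>)
  also have "\<dots> = M $$ (i,j) + (if i = a then c * M $$ (a',j) else 0)"
    using assms by (simp add: sum.distrib sum.delta')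
  finally show ?thesis .
qed

lemma index_scale_row_mat_mult:
  fixes M :: "'a::field poly mat"
  assumes M: "M \<in> carrier_mat n n" and "i < n" "j < n"
  shows "(scale_row_mat n a \<alpha> * M) $$ (i,j) = (if i = a then [:\<alpha>:] * M $$ (i,j) else M $$ (i,j))"
proof -
  have "(scale_row_mat n a \<alpha> * M) $$ (i,j) =
      (\<Sum>k<n. if k = i then (if i = a then [:\<alpha>:] else 1) * M $$ (i,j) else 0)"
    unfolding index_mult_mat_sum[OF carrier_scale_row_mat M assms(2,3)]
    by (rule sum.cong[OF refl]) (use assms in \<open>auto simp: scale_row_mat_def\<close>)
  then show ?thesis
    using assms by simp
qed

lemma add_row_mat_inverse:
  fixes c :: "'a::field poly"
  assumes "a \<noteq> a'" "a' < n"
  shows "add_row_mat n a a' c * add_row_mat n a a' (- c) = 1\<^sub>m n"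
  by (rule eq_matI) (use assms in \<open>auto simp: index_add_row_mat_mult, auto simp: add_row_mat_def E_mat_def\<close>)

lemma scale_row_mat_inverse:
  fixes \<alpha> :: "'a::field"
  assumes "\<alpha> \<noteq> 0"
  shows "scale_row_mat n a \<alpha> * scale_row_mat n a (inverse \<alpha>) = 1\<^sub>m n"
proof (rule eq_matI)
  fix i j assume "i < dim_row (1\<^sub>m n :: 'a poly mat)" "j < dim_col (1\<^sub>m n :: 'a poly mat)"
  then show "(scale_row_mat n a \<alpha> * scale_row_mat n a (inverse \<alpha>)) $$ (i, j) = 1\<^sub>m n $$ (i, j)"
    using assms by (subst index_scale_row_mat_mult[of _ n]) (auto simp: scale_row_mat_def one_pCons)
qed auto

lemma inverse_pair_mult:
  fixes A A' B B' :: "'a::semiring_1 mat"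
  assumes carrier: "A \<in> carrier_mat n n" "A' \<in> carrier_mat n n" "B \<in> carrier_mat n n" "B' \<in> carrier_mat n n"
    and A: "A * A' = 1\<^sub>m n" "A' * A = 1\<^sub>m n" and B: "B * B' = 1\<^sub>m n" "B' * B = 1\<^sub>m n"
  shows "(A * B) * (B' * A') = 1\<^sub>m n" "(B' * A') * (A * B) = 1\<^sub>m n"
proof -
  have "(A * B) * (B' * A') = A * (B * B') * A'"
    using carrier by (simp add: assoc_mult_mat[of _ n n _ n _ n])
  then show "(A * B) * (B' * A') = 1\<^sub>m n"
    using carrier A B by simp
  have "(B' * A') * (A * B) = B' * (A' * A) * B"
    using carrier by (simp add: assoc_mult_mat[of _ n n _ n _ n])
  then show "(B' * A') * (A * B) = 1\<^sub>m n"
    using carrier A B by simp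
qed

lemma mat_prod_list_Nil [simp]: "mat_prod_list n [] = 1\<^sub>m n"
  by (simp add: mat_prod_list_def)

lemma mat_prod_list_Cons [simp]: "mat_prod_list n (U # Us) = U * mat_prod_list n Us"
  by (simp add: mat_prod_list_def)

lemma carrier_mat_prod_list:
  "\<forall>U\<in>set Us. U \<in> carrier_mat n n \<Longrightarrow> mat_prod_list n Us \<in> carrier_mat n n"
  by (induction Us) auto

lemma mat_prod_list_append:
  assumes "\<forall>U\<in>set Us. U \<in> carrier_mat n n" "\<forall>U\<in>set Vs. U \<in> carrier_mat n n"
  shows "mat_prod_list n (Us @ Vs) = mat_prod_list n Us * mat_prod_list n Vs"
  using assms
proof (induction Us)
  case Nil
  then show ?case using carrier_mat_prod_list[of Vs n] by simp
next
  case (Cons U Us)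
  then show ?case
    using carrier_mat_prod_list[of Vs n] carrier_mat_prod_list[of Us n]
    by (simp add: assoc_mult_mat[of U n n _ n _ n])
qed

lemma mat_prod_list_scale_row_mats:
  fixes f :: "nat \<Rightarrow> 'a::field"
  assumes "distinct as"
  shows "mat_prod_list n (map (\<lambda>a. scale_row_mat n a (f a)) as) =
     mat n n (\<lambda>(i,j). if i = j then (if i \<in> set as then [:f i:] else 1) else 0)"
  using assms
proof (induction as)
  case Nil
  show ?case by (rule eq_matI) auto
next
  case (Cons a as)
  show ?case
  proof (rule eq_matI)
    fix i j assume "i < dim_row (mat n n (\<lambda>(i,j). if i = j then (if i \<in> set (a # as) then [:f i:] else 1) else (0 :: 'a poly)))"
      "j < dim_col (mat n n (\<lambda>(i,j). if i = j then (if i \<in> set (a # as) then [:f i:] else 1) else (0 :: 'a poly)))"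
    then show "mat_prod_list n (map (\<lambda>a. scale_row_mat n a (f a)) (a # as)) $$ (i, j) =
        mat n n (\<lambda>(i,j). if i = j then (if i \<in> set (a # as) then [:f i:] else 1) else 0) $$ (i, j)"
      using Cons by (simp only: list.map(2) mat_prod_list_Cons, subst index_scale_row_mat_mult[of _ n]) auto
  qed (use Cons in simp_all)
qed

lemma elementary_unit_alt:
  "elementary_unit n U \<longleftrightarrow>
     (\<exists>\<alpha> a. \<alpha> \<noteq> 0 \<and> a < n \<and> U = scale_row_mat n a \<alpha>)
   \<or> (\<exists>N \<alpha> a a'. a < a' \<and> a' < n \<and> U = add_row_mat n a a' (monom \<alpha> N))
   \<or> (\<exists>N \<alpha> a a'. 0 < N \<and> a' < a \<and> a < n \<and> U = add_row_mat n a a' (monom \<alpha> N))"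
  unfolding elementary_unit_def scale_row_mat_def add_row_mat_def by simp

lemma elementary_unit_scale_row_mat:
  "\<alpha> \<noteq> 0 \<Longrightarrow> a < n \<Longrightarrow> elementary_unit n (scale_row_mat n a \<alpha>)"
  unfolding elementary_unit_alt by blast

lemma elementary_unit_add_row_mat:
  assumes "a < n" "a' < n" "a \<noteq> a'" "a < a' \<or> 0 < N"
  shows "elementary_unit n (add_row_mat n a a' (monom \<alpha> N))"
proof (cases "a < a'")
  case True
  then show ?thesis using assms unfolding elementary_unit_alt by blast
next
  case False
  then have "a' < a" "0 < N" using assms by auto
  then show ?thesis using assms unfolding elementary_unit_alt by blast
qed

lemma carrier_elementary_unit: "elementary_unit n U \<Longrightarrow> U \<in> carrier_mat n n"
  unfolding elementary_unit_alt by auto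

lemma in_M_one: "in_M n (1\<^sub>m n :: 'a::field poly mat)"
  by (simp add: in_M_def)

lemma in_M_mult:
  fixes A B :: "'a::field poly mat"
  assumes A: "in_M n A" and B: "in_M n B"
  shows "in_M n (A * B)"
  unfolding in_M_def
proof (intro conjI allI impI)
  have A_carrier: "A \<in> carrier_mat n n" and B_carrier: "B \<in> carrier_mat n n"
    using A B by (auto simp: in_M_def)
  then show "A * B \<in> carrier_mat n n" by simp
  fix a b assume ab: "a < n" "b < n" "b < a"
  have "poly ((A * B) $$ (a,b)) 0 = (\<Sum>k<n. poly (A $$ (a,k)) 0 * poly (B $$ (k,b)) 0)"
    unfolding index_mult_mat_sum[OF A_carrier B_carrier ab(1,2)] by (simp add: poly_sum)
  also have "\<dots> = 0"
  proof (rule sum.neutral, rule ballI)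
    fix k assume "k \<in> {..<n}"
    \<comment> \<open>either \<open>k < a\<close> (so \<open>A $$ (a,k)\<close> vanishes at 0) or \<open>b < k\<close> (so \<open>B $$ (k,b)\<close> does)\<close>
    then show "poly (A $$ (a,k)) 0 * poly (B $$ (k,b)) 0 = 0"
      using A B ab by (cases "k < a") (auto simp: in_M_def)
  qed
  finally show "poly ((A * B) $$ (a,b)) 0 = 0" .
qed

lemma in_M_elementary_unit:
  fixes U :: "'a::field poly mat"
  assumes "elementary_unit n U"
  shows "in_M n U"
  using assms unfolding elementary_unit_alt
  by (auto simp: in_M_def scale_row_mat_def add_row_mat_def E_mat_def poly_monom)

lemma in_M_mat_prod_list:
  fixes Us :: "'a::field poly mat list"
  shows "\<forall>U\<in>set Us. elementary_unit n U \<Longrightarrow> in_M n (mat_prod_list n Us)"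
  by (induction Us) (auto simp: in_M_one in_M_mult in_M_elementary_unit)

lemma elementary_unit_inverse:
  fixes U :: "'a::field poly mat"
  assumes "elementary_unit n U"
  obtains V where "elementary_unit n V" "U * V = 1\<^sub>m n" "V * U = 1\<^sub>m n"
  using assms[unfolded elementary_unit_alt]
proof (elim disjE exE conjE)
  fix \<alpha> a assume "\<alpha> \<noteq> 0" "a < n" "U = scale_row_mat n a \<alpha>"
  then show thesis
    using that[of "scale_row_mat n a (inverse \<alpha>)"]
      scale_row_mat_inverse[of \<alpha> n a] scale_row_mat_inverse[of "inverse \<alpha>" n a]
    by (auto simp: elementary_unit_scale_row_mat)
next
  fix N \<alpha> a a' assume "a < a'" "a' < n" "U = add_row_mat n a a' (monom \<alpha> N)"
  then show thesis
    using that[of "add_row_mat n a a' (monom (- \<alpha>) N)"]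
      add_row_mat_inverse[of a a' n "monom \<alpha> N"] add_row_mat_inverse[of a a' n "monom (- \<alpha>) N"]
    by (auto simp: elementary_unit_add_row_mat minus_monom)
next
  fix N \<alpha> a a' assume "0 < N" "a' < a" "a < n" "U = add_row_mat n a a' (monom \<alpha> N)"
  then show thesis
    using that[of "add_row_mat n a a' (monom (- \<alpha>) N)"]
      add_row_mat_inverse[of a a' n "monom \<alpha> N"] add_row_mat_inverse[of a a' n "monom (- \<alpha>) N"]
    by (auto simp: elementary_unit_add_row_mat minus_monom)
qed

lemma mat_prod_list_inverse:
  fixes Us :: "'a::field poly mat list"
  assumes "\<forall>U\<in>set Us. elementary_unit n U"
  obtains Vs where "\<forall>V\<in>set Vs. elementary_unit n V"
    "mat_prod_list n Us * mat_prod_list n Vs = 1\<^sub>m n" "mat_prod_list n Vs * mat_prod_list n Us = 1\<^sub>m n"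
  using assms
proof (induction Us arbitrary: thesis)
  case Nil
  then show ?case by (metis empty_iff empty_set mat_prod_list_Nil right_mult_one_mat one_carrier_mat)
next
  case (Cons U Us)
  obtain Vs where Vs: "\<forall>V\<in>set Vs. elementary_unit n V"
    "mat_prod_list n Us * mat_prod_list n Vs = 1\<^sub>m n" "mat_prod_list n Vs * mat_prod_list n Us = 1\<^sub>m n"
    using Cons.IH Cons.prems(2) by auto
  obtain V where V: "elementary_unit n V" "U * V = 1\<^sub>m n" "V * U = 1\<^sub>m n"
    using elementary_unit_inverse Cons.prems(2) by auto
  have "mat_prod_list n (Vs @ [V]) = mat_prod_list n Vs * V"
    using mat_prod_list_append[of Vs n "[V]"] Vs(1) carrier_elementary_unit[OF V(1)]
    by (simp add: carrier_elementary_unit)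
  then show ?case
    using Cons.prems inverse_pair_mult[OF _ _ _ _ V(2,3) Vs(2,3)] Vs(1) V(1)
      Cons.prems(1)[of "Vs @ [V]"]
    by (simp add: carrier_elementary_unit carrier_mat_prod_list)
qed

definition deg_entry :: "nat \<Rightarrow> nat \<Rightarrow> nat \<Rightarrow> 'a::zero poly \<Rightarrow> int" where
  "deg_entry n a b p = int n * int (degree p) - int a + int b"

(* unspecified for a trivial row (Max of the empty set); every use is guarded by nontrivial_row *)
definition row_deg :: "nat \<Rightarrow> 'a::field poly mat \<Rightarrow> nat \<Rightarrow> int" where
  "row_deg n M a = Max ((\<lambda>b. deg_entry n a b (M $$ (a,b))) ` {b. b < n \<and> M $$ (a,b) \<noteq> 0})"

lemma deg_mat_eq:
  "deg_mat n M a b = (if M $$ (a,b) = 0 then None else Some (deg_entry n a b (M $$ (a,b))))"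
  by (simp add: deg_mat_def deg_entry_def)

lemma deg_entry_mult:
  fixes p q :: "'a::field poly"
  assumes "p \<noteq> 0" "q \<noteq> 0"
  shows "deg_entry n a b (p * q) = deg_entry n a k p + deg_entry n k b q"
  using assms by (simp add: deg_entry_def degree_mult_eq algebra_simps)

lemma deg_entry_less_iff:
  "0 < n \<Longrightarrow> deg_entry n a b p < deg_entry n a b q \<longleftrightarrow> degree p < degree q"
  by (simp add: deg_entry_def)

lemma deg_entry_mono: "degree p \<le> degree q \<Longrightarrow> deg_entry n a b p \<le> deg_entry n a b q"
  by (simp add: deg_entry_def mult_left_mono)

lemma deg_entry_add_less:
  fixes p q :: "'a::field poly"
  assumes "p \<noteq> 0 \<Longrightarrow> deg_entry n a b p < R" "q \<noteq> 0 \<Longrightarrow> deg_entry n a b q < R" "p + q \<noteq> 0"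
  shows "deg_entry n a b (p + q) < R"
proof (cases "p = 0 \<or> q = 0")
  case False
  have "degree (p + q) \<le> degree p \<or> degree (p + q) \<le> degree q"
    using degree_add_le_max[of p q] by linarith
  then show ?thesis
    using deg_entry_mono[of "p + q" p n a b] deg_entry_mono[of "p + q" q n a b] assms False by fastforce
qed (use assms in auto)

\<comment> \<open>the value modulo \<open>n\<close> recovers the column: this is why maxima of a row are unique\<close>
lemma deg_entry_neq:
  assumes "b < n" "b' < n" "b \<noteq> b'"
  shows "deg_entry n a b p \<noteq> deg_entry n a b' q"
proof
  assume "deg_entry n a b p = deg_entry n a b' q"
  then have "int (n * degree p + b) = int (n * degree q + b')" by (simp add: deg_entry_def)
  then have "n * degree p + b = n * degree q + b'" by linarith
  then have "(n * degree p + b) mod n = (n * degree q + b') mod n" by simp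
  then show False using assms by simp
qed

lemma deg_entry_nonneg:
  fixes M :: "'a::field poly mat"
  assumes "in_M n M" "a < n" "b < n" "M $$ (a,b) \<noteq> 0"
  shows "0 \<le> deg_entry n a b (M $$ (a,b))"
proof (cases "a \<le> b")
  case True
  have "0 \<le> int n * int (degree (M $$ (a,b)))" by simp
  then show ?thesis using True unfolding deg_entry_def by linarith
next
  case False
  then have "poly (M $$ (a,b)) 0 = 0" using assms by (auto simp: in_M_def)
  then have "degree (M $$ (a,b)) \<noteq> 0"
    using assms(4) degree_0_id[of "M $$ (a,b)"] by (auto simp: poly_0_coeff_0)
  then have "int n * 1 \<le> int n * int (degree (M $$ (a,b)))" by (intro mult_left_mono) auto
  then show ?thesis using assms(2) unfolding deg_entry_def by linarith
qed

lemma nontrivial_row_iff: "nontrivial_row n M a \<longleftrightarrow> (\<exists>b<n. M $$ (a,b) \<noteq> 0)"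
  by (auto simp: nontrivial_row_def deg_mat_eq)

lemma deg_entry_le_row_deg:
  assumes "b < n" "M $$ (a,b) \<noteq> 0"
  shows "deg_entry n a b (M $$ (a,b)) \<le> row_deg n M a"
  unfolding row_deg_def by (rule Max_ge) (use assms in simp_all)

lemma row_deg_attained:
  assumes "b < n" "M $$ (a,b) \<noteq> 0"
  obtains b' where "b' < n" "M $$ (a,b') \<noteq> 0" "deg_entry n a b' (M $$ (a,b')) = row_deg n M a"
proof -
  let ?S = "{b. b < n \<and> M $$ (a,b) \<noteq> 0}"
  have "?S \<noteq> {}" using assms by blast
  then have "row_deg n M a \<in> (\<lambda>b. deg_entry n a b (M $$ (a,b))) ` ?S"
    unfolding row_deg_def by (intro Max_in) simp_all
  then show thesis using that by auto
qed

lemma row_deg_nonneg: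
  fixes M :: "'a::field poly mat"
  assumes "in_M n M" "a < n" "b < n" "M $$ (a,b) \<noteq> 0"
  shows "0 \<le> row_deg n M a"
  using deg_entry_nonneg[OF assms] deg_entry_le_row_deg[OF assms(3,4)] by linarith

lemma row_max_cols_iff:
  "b \<in> row_max_cols n M a \<longleftrightarrow> b < n \<and> M $$ (a,b) \<noteq> 0 \<and> deg_entry n a b (M $$ (a,b)) = row_deg n M a"
proof
  assume "b \<in> row_max_cols n M a"
  then have b: "b < n" "M $$ (a,b) \<noteq> 0"
    and le: "\<And>b'. b' < n \<Longrightarrow> M $$ (a,b') \<noteq> 0 \<Longrightarrow> deg_entry n a b' (M $$ (a,b')) \<le> deg_entry n a b (M $$ (a,b))"
    by (auto simp: row_max_cols_def deg_mat_eq split: if_splits)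
  obtain b' where b': "b' < n" "M $$ (a,b') \<noteq> 0" "deg_entry n a b' (M $$ (a,b')) = row_deg n M a"
    using row_deg_attained[OF b] .
  have "row_deg n M a \<le> deg_entry n a b (M $$ (a,b))"
    using le[OF b'(1,2)] b'(3) by simp
  then show "b < n \<and> M $$ (a,b) \<noteq> 0 \<and> deg_entry n a b (M $$ (a,b)) = row_deg n M a"
    using b deg_entry_le_row_deg[OF b] by simp
next
  assume b: "b < n \<and> M $$ (a,b) \<noteq> 0 \<and> deg_entry n a b (M $$ (a,b)) = row_deg n M a"
  have le: "deg_entry n a b' (M $$ (a,b')) \<le> deg_entry n a b (M $$ (a,b))"
    if "b' < n" "M $$ (a,b') \<noteq> 0" for b'
    using b deg_entry_le_row_deg[OF that] by simp
  show "b \<in> row_max_cols n M a"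
    unfolding row_max_cols_def
    using b le by (auto simp: deg_mat_eq split: if_splits)
qed

lemma deg_entry_less_row_deg:
  assumes "b \<in> row_max_cols n M a" "j < n" "j \<noteq> b" "M $$ (a,j) \<noteq> 0"
  shows "deg_entry n a j (M $$ (a,j)) < row_deg n M a"
proof -
  have b: "b < n" "deg_entry n a b (M $$ (a,b)) = row_deg n M a"
    using assms(1) row_max_cols_iff by auto
  have "deg_entry n a j (M $$ (a,j)) \<noteq> deg_entry n a b (M $$ (a,b))"
    using deg_entry_neq[OF assms(2) b(1) assms(3)] .
  then show ?thesis
    using deg_entry_le_row_deg[OF assms(2,4)] b(2) by (simp add: less_le)
qed

lemma semi_reduced_deg_entry_less:
  assumes "semi_reduced n M" "a < n" "a' < n" "a \<noteq> a'" "b \<in> row_max_cols n M a" "M $$ (a',b) \<noteq> 0"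
  shows "deg_entry n a' b (M $$ (a',b)) < row_deg n M a'"
proof -
  have b: "b < n" "M $$ (a,b) \<noteq> 0" using assms(5) row_max_cols_iff by auto
  then have "nontrivial_row n M a" "nontrivial_row n M a'"
    using assms(6) by (auto simp: nontrivial_row_iff)
  then have "b \<notin> row_max_cols n M a'"
    using assms(1-5) unfolding semi_reduced_def by blast
  then show ?thesis
    using deg_entry_le_row_deg[OF b(1) assms(6)] b assms(6) row_max_cols_iff[of b n M a'] by auto
qed

lemma degree_add_less_of_lead_cancel:
  fixes p q :: "'a::comm_ring poly"
  assumes "degree q = degree p" "lead_coeff q = - lead_coeff p" "p + q \<noteq> 0"
  shows "degree (p + q) < degree p"
proof -
  have "degree (p + q) \<le> degree p"
    using degree_add_le_max[of p q] assms(1) by simp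
  moreover have "coeff (p + q) (degree p) = 0"
    using assms(1,2) by simp
  ultimately show ?thesis
    using assms(3) leading_coeff_0_iff le_neq_implies_less by metis
qed

lemma degree_sum_dominant:
  fixes t :: "'b \<Rightarrow> 'a::comm_ring poly"
  assumes "finite S" "k0 \<in> S" "t k0 \<noteq> 0"
    and smaller: "\<And>k. k \<in> S \<Longrightarrow> k \<noteq> k0 \<Longrightarrow> t k \<noteq> 0 \<Longrightarrow> degree (t k) < degree (t k0)"
  shows "sum t S \<noteq> 0" "degree (sum t S) = degree (t k0)"
proof -
  have sum_split: "sum t S = t k0 + sum t (S - {k0})"
    using assms(1,2) by (rule sum.remove)
  have "sum t S \<noteq> 0 \<and> degree (sum t S) = degree (t k0)"
  proof (cases "degree (t k0) = 0")
    case True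
    then have "sum t (S - {k0}) = 0"
      using smaller by (intro sum.neutral) force
    then show ?thesis using sum_split assms(3) by simp
  next
    case False
    have "degree (sum t (S - {k0})) < degree (t k0)"
    proof (rule degree_sum_less)
      fix k assume "k \<in> S - {k0}"
      then show "degree (t k) < degree (t k0)"
        using smaller False by (cases "t k = 0") auto
    qed (use False in simp)
    then have "degree (sum t S) = degree (t k0)"
      using sum_split degree_add_eq_left by simp
    then show ?thesis using False by auto
  qed
  then show "sum t S \<noteq> 0" "degree (sum t S) = degree (t k0)" by auto
qed

lemma deg_entry_eq_iff:
  "0 < n \<Longrightarrow> deg_entry n a b p = deg_entry n a b q \<longleftrightarrow> degree p = degree q"
  by (simp add: deg_entry_def)

lemma deg_entry_monom:
  "\<alpha> \<noteq> 0 \<Longrightarrow> deg_entry n a a' (monom \<alpha> N) = int n * int N - int a + int a'"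
  by (simp add: deg_entry_def degree_monom_eq)

lemma row_add_lowers_row_deg:
  fixes M :: "'a::field poly mat"
  assumes n: "0 < n" and b: "b \<in> row_max_cols n M a" "b \<in> row_max_cols n M a'"
    and shift: "int n * int N + row_deg n M a' + int a' = row_deg n M a + int a"
    and cancel: "\<alpha> * lead_coeff (M $$ (a',b)) = - lead_coeff (M $$ (a,b))"
    and j: "j < n" and nonzero: "M $$ (a,j) + monom \<alpha> N * M $$ (a',j) \<noteq> 0"
  shows "deg_entry n a j (M $$ (a,j) + monom \<alpha> N * M $$ (a',j)) < row_deg n M a"
proof -
  have Mb: "M $$ (a,b) \<noteq> 0" "M $$ (a',b) \<noteq> 0"
    and max: "deg_entry n a b (M $$ (a,b)) = row_deg n M a" "deg_entry n a' b (M $$ (a',b)) = row_deg n M a'"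
    using b row_max_cols_iff by auto
  have \<alpha>: "\<alpha> \<noteq> 0" using cancel Mb(1) by auto
  have shifted: "deg_entry n a k (monom \<alpha> N * M $$ (a',k)) = int n * int N - int a + int a' + deg_entry n a' k (M $$ (a',k))"
    if "M $$ (a',k) \<noteq> 0" for k
    using deg_entry_mult[of "monom \<alpha> N" "M $$ (a',k)" n a k a'] deg_entry_monom[OF \<alpha>] \<alpha> that by simp
  show ?thesis
  proof (cases "j = b")
    case True
    have "deg_entry n a b (monom \<alpha> N * M $$ (a',b)) = deg_entry n a b (M $$ (a,b))"
      using shifted[OF Mb(2)] max shift by simp
    then have "degree (monom \<alpha> N * M $$ (a',b)) = degree (M $$ (a,b))"
      using deg_entry_eq_iff[OF n] by blast
    moreover have "lead_coeff (monom \<alpha> N * M $$ (a',b)) = - lead_coeff (M $$ (a,b))"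
      using cancel \<alpha> by (simp add: lead_coeff_mult degree_monom_eq)
    ultimately have "degree (M $$ (a,b) + monom \<alpha> N * M $$ (a',b)) < degree (M $$ (a,b))"
      using nonzero True by (intro degree_add_less_of_lead_cancel) auto
    then show ?thesis
      using deg_entry_less_iff[OF n] max(1) True by metis
  next
    case False
    show ?thesis
    proof (rule deg_entry_add_less[OF _ _ nonzero])
      show "deg_entry n a j (M $$ (a,j)) < row_deg n M a" if "M $$ (a,j) \<noteq> 0"
        using deg_entry_less_row_deg[OF b(1) j False that] .
      show "deg_entry n a j (monom \<alpha> N * M $$ (a',j)) < row_deg n M a" if "monom \<alpha> N * M $$ (a',j) \<noteq> 0"
        using shifted[of j] deg_entry_less_row_deg[OF b(2) j False] that shift by fastforce
    qed
  qed
qed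

definition deg_potential :: "nat \<Rightarrow> 'a::field poly mat \<Rightarrow> nat" where
  "deg_potential n M = (\<Sum>a<n. if nontrivial_row n M a then nat (row_deg n M a) + 1 else 0)"

lemma deg_potential_less:
  fixes M M' :: "'a::field poly mat"
  assumes M: "in_M n M" and M': "in_M n M'" and a: "a < n" and nontrivial: "nontrivial_row n M a"
    and same: "\<And>i j. i < n \<Longrightarrow> i \<noteq> a \<Longrightarrow> j < n \<Longrightarrow> M' $$ (i,j) = M $$ (i,j)"
    and lower: "\<And>j. j < n \<Longrightarrow> M' $$ (a,j) \<noteq> 0 \<Longrightarrow> deg_entry n a j (M' $$ (a,j)) < row_deg n M a"
  shows "deg_potential n M' < deg_potential n M"
  unfolding deg_potential_def
proof (rule sum_strict_mono_ex1)
  let ?w = "\<lambda>M i. if nontrivial_row n M i then nat (row_deg n M i) + 1 else 0"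
  have other_rows: "?w M' i = ?w M i" if i: "i < n" "i \<noteq> a" for i
  proof -
    have "row_deg n M' i = row_deg n M i"
      unfolding row_deg_def by (rule arg_cong[where f = Max], rule image_cong) (auto simp: same i)
    moreover have "nontrivial_row n M' i = nontrivial_row n M i"
      by (auto simp: nontrivial_row_iff same i)
    ultimately show ?thesis by simp
  qed
  have row_a: "?w M' a < ?w M a"
  proof (cases "nontrivial_row n M' a")
    case True
    then obtain j where j: "j < n" "M' $$ (a,j) \<noteq> 0" by (auto simp: nontrivial_row_iff)
    obtain j' where j': "j' < n" "M' $$ (a,j') \<noteq> 0" "deg_entry n a j' (M' $$ (a,j')) = row_deg n M' a"
      using row_deg_attained[OF j] .
    have "row_deg n M' a < row_deg n M a"
      using lower[OF j'(1,2)] j'(3) by simp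
    moreover have "0 \<le> row_deg n M' a"
      using row_deg_nonneg[OF M' a j] .
    ultimately show ?thesis using True nontrivial by simp
  qed (use nontrivial in simp)
  show "\<forall>i\<in>{..<n}. ?w M' i \<le> ?w M i"
  proof
    fix i assume "i \<in> {..<n}"
    show "?w M' i \<le> ?w M i"
    proof (cases "i = a")
      case True
      show ?thesis unfolding True by (rule less_imp_le[OF row_a])
    qed (use other_rows \<open>i \<in> {..<n}\<close> in simp)
  qed
  show "\<exists>i\<in>{..<n}. ?w M' i < ?w M i"
    using row_a a by blast
qed simp

lemma not_semi_reducedE:
  assumes "\<not> semi_reduced n M"
  obtains a a' b where "a < n" "a' < n" "a \<noteq> a'" "b \<in> row_max_cols n M a" "b \<in> row_max_cols n M a'"
    "row_deg n M a' \<le> row_deg n M a"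
proof -
  obtain a a' b where a: "a < n" "a' < n" "a \<noteq> a'"
    and b: "b \<in> row_max_cols n M a" "b \<in> row_max_cols n M a'"
    using assms unfolding semi_reduced_def by blast
  show thesis
  proof (cases "row_deg n M a' \<le> row_deg n M a")
    case True
    then show thesis by (rule that[OF a b])
  next
    case False
    then show thesis using that[OF a(2,1) a(3)[symmetric] b(2,1)] by simp
  qed
qed

lemma elementary_unit_lowering_deg_potential:
  fixes M :: "'a::field poly mat"
  assumes n: "0 < n" and M: "in_M n M" and "\<not> semi_reduced n M"
  obtains U where "elementary_unit n U" "deg_potential n (U * M) < deg_potential n M"
proof -
  obtain a a' b where a: "a < n" "a' < n" "a \<noteq> a'"
    and b: "b \<in> row_max_cols n M a" "b \<in> row_max_cols n M a'"
    and le: "row_deg n M a' \<le> row_deg n M a"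
    using not_semi_reducedE[OF assms(3)] .
  have Mc: "M \<in> carrier_mat n n" using M by (simp add: in_M_def)
  define d where "d = degree (M $$ (a,b))"
  define d' where "d' = degree (M $$ (a',b))"
  define N where "N = d - d'"
  define \<alpha> where "\<alpha> = - lead_coeff (M $$ (a,b)) / lead_coeff (M $$ (a',b))"
  define U where "U = add_row_mat n a a' (monom \<alpha> N)"
  have Mb: "b < n" "M $$ (a,b) \<noteq> 0" "M $$ (a',b) \<noteq> 0"
    and row_deg: "row_deg n M a = int n * int d - int a + int b" "row_deg n M a' = int n * int d' - int a' + int b"
    using b unfolding row_max_cols_iff by (auto simp: deg_entry_def d_def d'_def)
  have "int n * int d' < int n * int (d + 1)"
    using row_deg le a by (simp add: algebra_simps)
  then have "d' \<le> d" by (simp add: mult_less_cancel_left)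
  have "a < a' \<or> 0 < N"
  proof (cases "a < a'")
    case False
    then have "int n * int d' < int n * int d"
      using row_deg le a(3) by linarith
    then show ?thesis by (simp add: N_def mult_less_cancel_left)
  qed simp
  then have elementary: "elementary_unit n U"
    unfolding U_def using a by (intro elementary_unit_add_row_mat)
  have shift: "int n * int N + row_deg n M a' + int a' = row_deg n M a + int a"
    using row_deg \<open>d' \<le> d\<close> by (simp add: N_def of_nat_diff algebra_simps)
  have cancel: "\<alpha> * lead_coeff (M $$ (a',b)) = - lead_coeff (M $$ (a,b))"
    using Mb by (simp add: \<alpha>_def)
  have UM: "(U * M) $$ (i,j) = M $$ (i,j) + (if i = a then monom \<alpha> N * M $$ (a',j) else 0)"
    if "i < n" "j < n" for i j
    unfolding U_def using index_add_row_mat_mult[OF Mc a(2) that] .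
  have "deg_potential n (U * M) < deg_potential n M"
  proof (rule deg_potential_less[OF M _ a(1)])
    show "in_M n (U * M)"
      using in_M_mult[OF in_M_elementary_unit[OF elementary] M] .
    show "nontrivial_row n M a"
      using Mb by (auto simp: nontrivial_row_iff)
    show "(U * M) $$ (i,j) = M $$ (i,j)" if "i < n" "i \<noteq> a" "j < n" for i j
      using UM that by simp
    show "deg_entry n a j ((U * M) $$ (a,j)) < row_deg n M a" if "j < n" "(U * M) $$ (a,j) \<noteq> 0" for j
      using UM[OF a(1) that(1)] row_add_lowers_row_deg[OF n b shift cancel that(1)] that(2) by simp
  qed
  then show thesis using that elementary by blast
qed

lemma semi_reduction_exists:
  fixes M :: "'a::field poly mat"
  assumes "0 < n" "in_M n M"
  shows "\<exists>Us. (\<forall>U\<in>set Us. elementary_unit n U) \<and> semi_reduced n (mat_prod_list n Us * M)"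
  using assms(2)
proof (induction "deg_potential n M" arbitrary: M rule: less_induct)
  case less
  have Mc: "M \<in> carrier_mat n n" using less.prems by (simp add: in_M_def)
  show ?case
  proof (cases "semi_reduced n M")
    case True
    then show ?thesis using Mc by (intro exI[of _ "[]"]) simp
  next
    case False
    obtain U where U: "elementary_unit n U" "deg_potential n (U * M) < deg_potential n M"
      using elementary_unit_lowering_deg_potential[OF assms(1) less.prems False] .
    have "in_M n (U * M)"
      using in_M_mult[OF in_M_elementary_unit[OF U(1)] less.prems] .
    then obtain Us where Us: "\<forall>U\<in>set Us. elementary_unit n U" "semi_reduced n (mat_prod_list n Us * (U * M))"
      using less.hyps[OF U(2)] by blast
    have "mat_prod_list n (Us @ [U]) = mat_prod_list n Us * U"
      using mat_prod_list_append[of Us n "[U]"] Us(1) carrier_elementary_unit[OF U(1)]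
      by (simp add: carrier_elementary_unit)
    then have "mat_prod_list n (Us @ [U]) * M = mat_prod_list n Us * (U * M)"
      using Us(1) carrier_elementary_unit[OF U(1)] Mc
      by (simp add: assoc_mult_mat[of _ n n U n M n] carrier_elementary_unit carrier_mat_prod_list)
    then show ?thesis using Us U(1) by (intro exI[of _ "Us @ [U]"]) auto
  qed
qed

lemma unit_row_col_nonzero:
  fixes P Q :: "'a::field poly mat"
  assumes "P \<in> carrier_mat n n" "Q \<in> carrier_mat n n" "P * Q = 1\<^sub>m n" "a < n"
  obtains k where "k < n" "P $$ (a,k) \<noteq> 0" "Q $$ (k,a) \<noteq> 0"
proof (rule ccontr)
  assume "\<not> thesis"
  then have "(\<Sum>k<n. P $$ (a,k) * Q $$ (k,a)) = 0"
    using that by (intro sum.neutral) auto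
  moreover have "(P * Q) $$ (a,a) = 1" using assms by simp
  ultimately show False using index_mult_mat_sum[OF assms(1,2,4,4)] by simp
qed

lemma semi_reduced_predictable_degree:
  fixes P Q :: "'a::field poly mat"
  assumes n: "0 < n" and P: "P \<in> carrier_mat n n" and Q: "Q \<in> carrier_mat n n"
    and sr: "semi_reduced n P" and i: "i < n" and a0: "a0 < n" "Q $$ (i,a0) \<noteq> 0"
    and b: "b \<in> row_max_cols n P a0"
    and max: "\<And>a. a < n \<Longrightarrow> Q $$ (i,a) \<noteq> 0 \<Longrightarrow>
      deg_entry n i a (Q $$ (i,a)) + row_deg n P a \<le> deg_entry n i a0 (Q $$ (i,a0)) + row_deg n P a0"
  shows "(Q * P) $$ (i,b) \<noteq> 0"
    "deg_entry n i b ((Q * P) $$ (i,b)) = deg_entry n i a0 (Q $$ (i,a0)) + row_deg n P a0"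
proof -
  define t where "t k = Q $$ (i,k) * P $$ (k,b)" for k
  have Pb: "b < n" "P $$ (a0,b) \<noteq> 0" "deg_entry n a0 b (P $$ (a0,b)) = row_deg n P a0"
    using b row_max_cols_iff by auto
  have t0: "t a0 \<noteq> 0" using a0 Pb by (simp add: t_def)
  have deg_t0: "deg_entry n i b (t a0) = deg_entry n i a0 (Q $$ (i,a0)) + row_deg n P a0"
    using deg_entry_mult[OF a0(2) Pb(2), of n i b a0] Pb(3) by (simp add: t_def)
  have smaller: "degree (t k) < degree (t a0)" if k: "k \<in> {..<n}" "k \<noteq> a0" "t k \<noteq> 0" for k
  proof -
    have q: "Q $$ (i,k) \<noteq> 0" and p: "P $$ (k,b) \<noteq> 0" using k by (auto simp: t_def)
    have "deg_entry n k b (P $$ (k,b)) < row_deg n P k"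
      using semi_reduced_deg_entry_less[OF sr a0(1) _ k(2)[symmetric] b p] k(1) by simp
    then have "deg_entry n i b (t k) < deg_entry n i b (t a0)"
      using deg_entry_mult[OF q p, of n i b k] max[OF _ q] k(1) deg_t0 by (simp add: t_def)
    then show ?thesis using deg_entry_less_iff[OF n] by blast
  qed
  have QP: "(Q * P) $$ (i,b) = (\<Sum>k<n. t k)"
    unfolding t_def by (rule index_mult_mat_sum[OF Q P i Pb(1)])
  show "(Q * P) $$ (i,b) \<noteq> 0"
    using degree_sum_dominant(1)[of "{..<n}" a0 t] a0(1) t0 smaller QP by simp
  have "degree ((Q * P) $$ (i,b)) = degree (t a0)"
    using degree_sum_dominant(2)[of "{..<n}" a0 t] a0(1) t0 smaller QP by simp
  then show "deg_entry n i b ((Q * P) $$ (i,b)) = deg_entry n i a0 (Q $$ (i,a0)) + row_deg n P a0"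
    using deg_t0 deg_entry_eq_iff[OF n] by metis
qed

lemma unit_semi_reduced_row_deg_zero:
  fixes P Q :: "'a::field poly mat"
  assumes n: "0 < n" and P: "in_M n P" and Q: "in_M n Q" and PQ: "P * Q = 1\<^sub>m n" and QP: "Q * P = 1\<^sub>m n"
    and sr: "semi_reduced n P" and a: "a < n"
  shows "row_deg n P a = 0"
proof -
  have Pc: "P \<in> carrier_mat n n" and Qc: "Q \<in> carrier_mat n n"
    using P Q by (auto simp: in_M_def)
  obtain i where i: "i < n" "P $$ (a,i) \<noteq> 0" "Q $$ (i,a) \<noteq> 0"
    using unit_row_col_nonzero[OF Pc Qc PQ a] .
  define f where "f a' = deg_entry n i a' (Q $$ (i,a')) + row_deg n P a'" for a'
  define S where "S = {a'. a' < n \<and> Q $$ (i,a') \<noteq> 0}"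
  have fin: "finite (f ` S)" by (simp add: S_def)
  have "f ` S \<noteq> {}" using i a by (auto simp: S_def)
  then have "Max (f ` S) \<in> f ` S" using Max_in[OF fin] by blast
  then obtain a0 where a0: "a0 \<in> S" "f a0 = Max (f ` S)" by (metis imageE)
  have max: "f a' \<le> f a0" if "a' < n" "Q $$ (i,a') \<noteq> 0" for a'
    using a0(2) Max_ge[OF fin] that by (simp add: S_def)
  have a0': "a0 < n" "Q $$ (i,a0) \<noteq> 0" using a0(1) by (simp_all add: S_def)
  obtain k where "k < n" "P $$ (a0,k) \<noteq> 0"
    using unit_row_col_nonzero[OF Pc Qc PQ a0'(1)] by blast
  then obtain b where b: "b \<in> row_max_cols n P a0"
    using row_deg_attained row_max_cols_iff by metis
  have b_n: "b < n" using b row_max_cols_iff by blast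
  note predictable = semi_reduced_predictable_degree[OF n Pc Qc sr i(1) a0' b max[unfolded f_def]]
  have QP_entry: "(Q * P) $$ (i,b) = (if i = b then 1 else 0)"
    using QP i(1) b_n by simp
  then have "i = b" using predictable(1) by presburger
  then have "f a0 = deg_entry n b b (1 :: 'a poly)"
    using predictable(2) QP_entry by (simp add: f_def)
  then have "f a0 = 0" by (simp add: deg_entry_def)
  then have "f a \<le> 0" using max[OF a i(3)] by simp
  moreover have "0 \<le> deg_entry n i a (Q $$ (i,a))" using deg_entry_nonneg[OF Q i(1) a i(3)] .
  moreover have "0 \<le> row_deg n P a" using row_deg_nonneg[OF P a i(1,2)] .
  ultimately show ?thesis unfolding f_def by linarith
qed

lemma row_deg_zero_entry:
  fixes P :: "'a::field poly mat"
  assumes P: "in_M n P" and a: "a < n" "row_deg n P a = 0" and j: "j < n" "P $$ (a,j) \<noteq> 0"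
  shows "j = a" "degree (P $$ (a,j)) = 0"
proof -
  have "deg_entry n a j (P $$ (a,j)) = 0"
    using deg_entry_nonneg[OF P a(1) j] deg_entry_le_row_deg[OF j] a(2) by simp
  then have "int (n * degree (P $$ (a,j)) + j) = int a"
    unfolding deg_entry_def by simp
  then have sum: "n * degree (P $$ (a,j)) + j = a"
    by (simp only: of_nat_eq_iff)
  show "degree (P $$ (a,j)) = 0"
  proof (rule ccontr)
    assume "degree (P $$ (a,j)) \<noteq> 0"
    then have "n \<le> n * degree (P $$ (a,j))" by simp
    then show False using sum a(1) by linarith
  qed
  then show "j = a" using sum by simp
qed

lemma unit_semi_reduced_elementary_product:
  fixes P Q :: "'a::field poly mat"
  assumes n: "0 < n" and P: "in_M n P" and Q: "in_M n Q" and PQ: "P * Q = 1\<^sub>m n" and QP: "Q * P = 1\<^sub>m n"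
    and sr: "semi_reduced n P"
  obtains Ds where "\<forall>D\<in>set Ds. elementary_unit n D" "P = mat_prod_list n Ds"
proof -
  have Pc: "P \<in> carrier_mat n n" and Qc: "Q \<in> carrier_mat n n"
    using P Q by (auto simp: in_M_def)
  have entry: "j = i \<and> degree (P $$ (i,j)) = 0" if "i < n" "j < n" "P $$ (i,j) \<noteq> 0" for i j
    using row_deg_zero_entry[OF P that(1) unit_semi_reduced_row_deg_zero[OF n P Q PQ QP sr that(1)] that(2,3)]
    by simp
  define g where "g a = coeff (P $$ (a,a)) 0" for a
  have diag: "P $$ (i,j) = (if i = j then [:g i:] else 0)" if "i < n" "j < n" for i j
  proof (cases "P $$ (i,j) = 0")
    case False
    then show ?thesis
      using entry[OF that False] degree_0_id[of "P $$ (i,j)"] by (auto simp: g_def)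
  qed (use entry[OF that] in \<open>auto simp: g_def\<close>)
  have g: "g a \<noteq> 0" if a: "a < n" for a
  proof -
    obtain k where "k < n" "P $$ (a,k) \<noteq> 0"
      using unit_row_col_nonzero[OF Pc Qc PQ a] by blast
    then show ?thesis using diag a by (cases "k = a") auto
  qed
  define Ds where "Ds = map (\<lambda>a. scale_row_mat n a (g a)) [0..<n]"
  have "P = mat_prod_list n Ds"
    unfolding Ds_def mat_prod_list_scale_row_mats[OF distinct_upt]
    by (rule eq_matI) (use Pc diag in auto)
  moreover have "\<forall>D\<in>set Ds. elementary_unit n D"
    using g by (auto simp: Ds_def elementary_unit_scale_row_mat)
  ultimately show thesis using that by blast
qed

theorem theorem3p13:
  fixes n :: nat
  assumes "n \<ge> 2" and "n dvd (card (UNIV :: ('a::{field,finite}) set) - 1)"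
  shows "(\<forall>M :: 'a poly mat. in_M n M \<longrightarrow>
            (\<exists>Us. (\<forall>U\<in>set Us. elementary_unit n U) \<and>
                  semi_reduced n (mat_prod_list n Us * M)))
       \<and> (\<forall>M :: 'a poly mat. in_M n M \<and> (\<exists>M'. in_M n M' \<and> M * M' = 1\<^sub>m n \<and> M' * M = 1\<^sub>m n)
            \<longrightarrow> (\<exists>Us. (\<forall>U\<in>set Us. elementary_unit n U) \<and> M = mat_prod_list n Us))"
proof (intro conjI allI impI)
  have n: "0 < n" using assms(1) by simp
  fix M :: "'a poly mat"
  show "in_M n M \<Longrightarrow> \<exists>Us. (\<forall>U\<in>set Us. elementary_unit n U) \<and> semi_reduced n (mat_prod_list n Us * M)"
    by (rule semi_reduction_exists[OF n])
  assume "in_M n M \<and> (\<exists>M'. in_M n M' \<and> M * M' = 1\<^sub>m n \<and> M' * M = 1\<^sub>m n)"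
  then obtain M' where M: "in_M n M" and M': "in_M n M'" "M * M' = 1\<^sub>m n" "M' * M = 1\<^sub>m n" by blast
  obtain Us where Us: "\<forall>U\<in>set Us. elementary_unit n U" "semi_reduced n (mat_prod_list n Us * M)"
    using semi_reduction_exists[OF n M] by blast
  obtain Vs where Vs: "\<forall>V\<in>set Vs. elementary_unit n V"
    "mat_prod_list n Us * mat_prod_list n Vs = 1\<^sub>m n" "mat_prod_list n Vs * mat_prod_list n Us = 1\<^sub>m n"
    using mat_prod_list_inverse[OF Us(1)] .
  have carrier: "mat_prod_list n Us \<in> carrier_mat n n" "mat_prod_list n Vs \<in> carrier_mat n n"
    "M \<in> carrier_mat n n" "M' \<in> carrier_mat n n"
    using Us(1) Vs(1) M M' by (auto simp: carrier_mat_prod_list carrier_elementary_unit in_M_def)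
  note unit = inverse_pair_mult[OF carrier Vs(2,3) M'(2,3)]
  obtain Ds where Ds: "\<forall>D\<in>set Ds. elementary_unit n D" "mat_prod_list n Us * M = mat_prod_list n Ds"
    using unit_semi_reduced_elementary_product[OF n in_M_mult[OF in_M_mat_prod_list[OF Us(1)] M]
        in_M_mult[OF M'(1) in_M_mat_prod_list[OF Vs(1)]] unit Us(2)] .
  have "M = mat_prod_list n Vs * (mat_prod_list n Us * M)"
    using Vs(3) carrier by (simp add: assoc_mult_mat[of _ n n _ n M n, symmetric])
  also have "\<dots> = mat_prod_list n (Vs @ Ds)"
    using Ds Vs(1) by (simp add: mat_prod_list_append carrier_elementary_unit)
  finally show "\<exists>Us. (\<forall>U\<in>set Us. elementary_unit n U) \<and> M = mat_prod_list n Us"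
    using Vs(1) Ds(1) by (intro exI[of _ "Vs @ Ds"]) auto
qed

end
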